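(* Every metacyclic subgroup of a finite symmetric group $S_m$ contains at most $4$ transpositions, and this bound is attained: the metacyclic subgroup $\langle (1\,2\,3)(4\,5),(1\,2)\rangle\le S_5$ contains exactly the four transpositions $(1\,2),(2\,3),(1\,3),(4\,5)$.
   Context: A group is metacyclic if it has a cyclic normal subgroup with cyclic quotient. *)

theory Defs
  imports "HOL-Algebra.Algebra"
begin

definition is_cyclic_group :: "('a, 'b) monoid_scheme \<Rightarrow> bool" where
  "is_cyclic_group G \<longleftrightarrow> group G \<and> (\<exists>g \<in> carrier G. carrier G = generate G {g})"

definition metacyclic :: "('a, 'b) monoid_scheme \<Rightarrow> bool" where
  "metacyclic G \<longleftrightarrow> group G \<and>
     (\<exists>N. N \<lhd> G \<and> is_cyclic_group (G\<lparr>carrier := N\<rparr>) \<and> is_cyclic_group (G Mod N))"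

definition transpositions_in :: "(nat \<Rightarrow> nat) set \<Rightarrow> (nat \<Rightarrow> nat) set" where
  "transpositions_in H = {p \<in> H. \<exists>a b. a \<noteq> b \<and> p = Transposition.transpose a b}"

end

theory Submission
  imports Defs
begin

text \<open>
  Let \<open>H \<le> S\<^sub>m\<close> have a cyclic normal subgroup \<open>N\<close> with cyclic quotient \<open>H/N\<close>.
  Two facts about cyclic groups drive the argument: a finite cyclic group has at most one
  involution, and two of its elements of order 3 are equal or mutually inverse.
  (1) If two distinct transpositions of \<open>H\<close> share a point, their commutator is a 3-cycle on the
  three points involved, and it lies in \<open>N\<close> because \<open>H/N\<close> is abelian; hence all such pairs
  move the same three points.
  (2) Three transpositions \<open>s, t, u\<close> with disjoint supports are impossible: since \<open>H/N\<close> has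
  at most one involution, each of \<open>{s, t, s t}\<close>, \<open>{s, u, s u}\<close>, \<open>{t, u, t u}\<close> meets \<open>N\<close> in an
  involution; as \<open>N\<close> has only one involution, the three sets would share an element.
  For sharpness, \<open>H\<^sub>0 = \<langle>(1 2 3)(4 5), (1 2)\<rangle>\<close> is metacyclic by a general criterion (a group
  generated by \<open>a, b\<close> where \<open>b\<close> normalises \<open>\<langle>a\<rangle>\<close>), and its transpositions are computed by
  noting that \<open>H\<^sub>0\<close> stabilises \<open>{1, 2, 3}\<close>.
\<close>

subsection \<open>Finite cyclic groups\<close>

lemma (in group) cyclic_torsion_exponent:
  assumes fin: "finite (carrier G)" and c: "c \<in> carrier G" "carrier G = generate G {c}"
    and z: "z \<in> carrier G" "z \<noteq> \<one>" "z [^] k = \<one>" and k: "0 < k"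
  obtains i q where "z = c [^] i" "k * i = ord c * q" "0 < q" "q < k"
proof -
  have "carrier G = {c [^] i | i. i \<in> {0 .. ord c - 1}}"
    using c generate_pow_on_finite_carrier[OF fin c(1)] ord_elems[OF fin c(1)] by simp
  then obtain i where i: "z = c [^] i" "i \<le> ord c - 1" using z(1) by auto
  have ord_pos: "0 < ord c" using ord_ge_1[OF fin c(1)] by simp
  have "c [^] (k * i) = \<one>" using z(3) i(1) c(1) by (simp add: nat_pow_pow mult.commute)
  then obtain q where q: "k * i = ord c * q" using pow_eq_id[OF c(1)] by (auto elim: dvdE)
  have "i \<noteq> 0" using z(2) i(1) by (metis nat_pow_0)
  then have "0 < q" using q k by (metis gr0I mult_0_right mult_is_0)
  have "k * i < k * ord c" using i ord_pos k by simp
  then have "ord c * q < ord c * k" using q by (metis mult.commute)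
  then have "q < k" by simp
  show thesis using that i(1) q \<open>0 < q\<close> \<open>q < k\<close> by blast
qed

lemma (in group) cyclic_involution_unique:
  assumes fin: "finite (carrier G)" and cyc: "is_cyclic_group G"
    and x: "x \<in> carrier G" "x \<noteq> \<one>" "x \<otimes> x = \<one>" and y: "y \<in> carrier G" "y \<noteq> \<one>" "y \<otimes> y = \<one>"
  shows "x = y"
proof -
  obtain c where c: "c \<in> carrier G" "carrier G = generate G {c}"
    using cyc unfolding is_cyclic_group_def by blast
  have half: "z = c [^] (ord c div 2)" if z: "z \<in> carrier G" "z \<noteq> \<one>" "z \<otimes> z = \<one>" for z
  proof -
    have pow: "z [^] (2::nat) = \<one>" using z by (simp add: numeral_2_eq_2)
    obtain i q where z_eq: "z = c [^] i" and iq: "2 * i = ord c * q" "0 < q" "q < 2"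
      by (rule cyclic_torsion_exponent[OF fin c z(1,2) pow pos2])
    have "q = 1" using iq(2,3) by simp
    then have "i = ord c div 2" using iq(1) by presburger
    then show ?thesis using z_eq by simp
  qed
  show ?thesis using half[OF x] half[OF y] by simp
qed

lemma (in group) cyclic_order3_elements:
  assumes fin: "finite (carrier G)" and cyc: "is_cyclic_group G"
    and x: "x \<in> carrier G" "x \<noteq> \<one>" "x \<otimes> x \<otimes> x = \<one>" and y: "y \<in> carrier G" "y \<noteq> \<one>" "y \<otimes> y \<otimes> y = \<one>"
  shows "y = x \<or> y = x \<otimes> x"
proof -
  obtain c where c: "c \<in> carrier G" "carrier G = generate G {c}"
    using cyc unfolding is_cyclic_group_def by blast
  have third: "\<exists>i. z = c [^] i \<and> (3 * i = ord c \<or> 3 * i = 2 * ord c)"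
    if z: "z \<in> carrier G" "z \<noteq> \<one>" "z \<otimes> z \<otimes> z = \<one>" for z
  proof -
    have pow: "z [^] (3::nat) = \<one>" using z by (simp add: numeral_3_eq_3 m_assoc)
    obtain i q where "z = c [^] i" "3 * i = ord c * q" "0 < q" "q < 3"
      by (rule cyclic_torsion_exponent[OF fin c z(1,2) pow zero_less_numeral])
    moreover have "q = 1 \<or> q = 2" using \<open>0 < q\<close> \<open>q < 3\<close> by auto
    ultimately show ?thesis by auto
  qed
  obtain i where i: "x = c [^] i" "3 * i = ord c \<or> 3 * i = 2 * ord c" using third[OF x] by blast
  obtain j where j: "y = c [^] j" "3 * j = ord c \<or> 3 * j = 2 * ord c" using third[OF y] by blast
  have square: "x \<otimes> x = c [^] (2 * i)" using i(1) c(1) by (simp add: nat_pow_mult mult_2)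
  consider "i = j" | "j = 2 * i" | "2 * i = ord c + j" using i(2) j(2) by linarith
  then show ?thesis
  proof cases
    case 3
    have "x \<otimes> x = c [^] (ord c + j)" using square 3 by simp
    also have "\<dots> = c [^] ord c \<otimes> c [^] j" by (rule nat_pow_mult[OF c(1), symmetric])
    also have "\<dots> = y" using c(1) j(1) by (simp add: pow_ord_eq_1)
    finally show ?thesis by simp
  qed (use i j square in auto)
qed

subsection \<open>Cyclic quotients\<close>

text \<open>A cyclic quotient \<open>G/H\<close> is abelian, so \<open>x y\<close> and \<open>y x\<close> differ by an element of \<open>H\<close>.\<close>
lemma (in normal) cyclic_quotient_commute_mod:
  assumes cyc: "is_cyclic_group (G Mod H)" and x: "x \<in> carrier G" and y: "y \<in> carrier G"
  shows "\<exists>n\<in>H. x \<otimes> y = n \<otimes> (y \<otimes> x)"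
proof -
  interpret Q: group "G Mod H" by (rule factorgroup_is_group)
  obtain g where g: "g \<in> carrier (G Mod H)" "carrier (G Mod H) = generate (G Mod H) {g}"
    using cyc unfolding is_cyclic_group_def by blast
  have "H #> x \<in> carrier (G Mod H)" "H #> y \<in> carrier (G Mod H)"
    using x y by (auto simp: carrier_FactGroup)
  then obtain i j :: int where "H #> x = g [^]\<^bsub>G Mod H\<^esub> i" "H #> y = g [^]\<^bsub>G Mod H\<^esub> j"
    using g Q.generate_pow[OF g(1)] by auto
  then have "(H #> x) <#> (H #> y) = (H #> y) <#> (H #> x)"
    using Q.int_pow_mult[OF g(1)] by (metis add.commute mult_FactGroup)
  then have "H #> (x \<otimes> y) = H #> (y \<otimes> x)" using x y by (simp add: rcos_sum)
  moreover have "x \<otimes> y \<in> H #> (x \<otimes> y)" using x y by (simp add: rcos_self subgroup_axioms)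
  ultimately show ?thesis unfolding r_coset_def by auto
qed

text \<open>If \<open>G/H\<close> is finite and cyclic, then for two involutions \<open>x, y\<close> of \<open>G\<close> one of
  \<open>x\<close>, \<open>y\<close>, \<open>x y\<close> lies in \<open>H\<close>: the quotient has at most one involution.\<close>
lemma (in normal) cyclic_quotient_involutions:
  assumes fin: "finite (carrier G)" and cyc: "is_cyclic_group (G Mod H)"
    and x: "x \<in> carrier G" "x \<otimes> x = \<one>" and y: "y \<in> carrier G" "y \<otimes> y = \<one>"
  shows "x \<in> H \<or> y \<in> H \<or> x \<otimes> y \<in> H"
proof -
  interpret Q: group "G Mod H" by (rule factorgroup_is_group)
  have fin_Q: "finite (carrier (G Mod H))" using fin by (simp add: carrier_FactGroup)
  have coset: "H #> z \<in> carrier (G Mod H)" "(H #> z) <#> (H #> z) = H"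
    if "z \<in> carrier G" "z \<otimes> z = \<one>" for z
    using that by (auto simp: carrier_FactGroup rcos_sum coset_join2 subgroup_axioms)
  have in_H: "z \<in> H" if "z \<in> carrier G" "H #> z = H" for z
    using coset_join1 that subgroup_axioms by blast
  show ?thesis
  proof (cases "H #> x = H \<or> H #> y = H")
    case True
    then show ?thesis using in_H x y by blast
  next
    case False
    then have "H #> x = H #> y"
      using Q.cyclic_involution_unique[OF fin_Q cyc] coset[OF x] coset[OF y] by simp
    then have "H #> (x \<otimes> y) = H" using coset[OF x] x y by (simp add: rcos_sum[symmetric])
    then show ?thesis using in_H x y by blast
  qed
qed

subsection \<open>A criterion for metacyclicity\<close>

lemma (in group) conjugate_generate_closed:
  assumes a: "a \<in> carrier G" and g: "g \<in> carrier G" and conj: "g \<otimes> a \<otimes> inv g \<in> generate G {a}"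
    and n: "n \<in> generate G {a}"
  shows "g \<otimes> n \<otimes> inv g \<in> generate G {a}"
  using n
proof (induction rule: generate.induct)
  case one
  then show ?case using g generate.one by simp
next
  case (incl h)
  then show ?case using conj by simp
next
  case (inv h)
  then have "g \<otimes> inv h \<otimes> inv g = inv (g \<otimes> h \<otimes> inv g)"
    using a g by (simp add: inv_mult_group m_assoc)
  then show ?case using inv conj generate_m_inv_closed[of "{a}"] a by simp
next
  case (eng h1 h2)
  have "h1 \<in> carrier G" "h2 \<in> carrier G"
    using eng.hyps generate_in_carrier[of "{a}"] a by auto
  then have "g \<otimes> (h1 \<otimes> h2) \<otimes> inv g = (g \<otimes> h1 \<otimes> inv g) \<otimes> (g \<otimes> h2 \<otimes> inv g)"
    using g by (simp add: m_assoc inv_solve_left)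
  then show ?case using eng.IH by (simp add: generate.eng)
qed

locale normalizing_pair = group +
  fixes a b
  assumes a_closed: "a \<in> carrier G" and b_closed: "b \<in> carrier G"
    and conj_b: "b \<otimes> a \<otimes> inv b \<in> generate G {a}" and conj_inv_b: "inv b \<otimes> a \<otimes> b \<in> generate G {a}"
begin

abbreviation "N \<equiv> generate G {a}"
abbreviation "E \<equiv> generate G {a, b}"
abbreviation "K \<equiv> G\<lparr>carrier := E\<rparr>"

lemma subgroup_N: "subgroup N G" using a_closed by (simp add: generate_is_subgroup)
lemma subgroup_E: "subgroup E G" using a_closed b_closed by (simp add: generate_is_subgroup)
lemma N_subset_E: "N \<subseteq> E" by (rule mono_generate) auto
lemma group_K: "group K" by (rule subgroup_imp_group[OF subgroup_E])

text \<open>The elements \<open>g\<close> with \<open>g N g\<^sup>-\<^sup>1 \<subseteq> N\<close> and \<open>g\<^sup>-\<^sup>1 N g \<subseteq> N\<close> form a subgroup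
  containing \<open>a\<close> and \<open>b\<close>, hence containing \<open>E\<close>.\<close>
lemma E_normalizes_N:
  assumes "g \<in> E" "n \<in> N" shows "g \<otimes> n \<otimes> inv g \<in> N"
proof -
  define C where "C = {g \<in> carrier G. \<forall>n\<in>N. g \<otimes> n \<otimes> inv g \<in> N \<and> inv g \<otimes> n \<otimes> g \<in> N}"
  have N_carrier: "n \<in> carrier G" if "n \<in> N" for n using that subgroup.subset[OF subgroup_N] by blast
  have subgroup_C: "subgroup C G"
  proof (rule subgroupI)
    show "C \<subseteq> carrier G" unfolding C_def by blast
    show "C \<noteq> {}" using N_carrier unfolding C_def by force
  next
    fix g assume "g \<in> C"
    then show "inv g \<in> C" unfolding C_def by simp
  next
    fix g h assume g: "g \<in> C" and h: "h \<in> C"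
    have "g \<otimes> h \<otimes> n \<otimes> inv (g \<otimes> h) = g \<otimes> (h \<otimes> n \<otimes> inv h) \<otimes> inv g"
      "inv (g \<otimes> h) \<otimes> n \<otimes> (g \<otimes> h) = inv h \<otimes> (inv g \<otimes> n \<otimes> g) \<otimes> h" if "n \<in> N" for n
      using g h N_carrier[OF that] unfolding C_def by (simp_all add: m_assoc inv_mult_group)
    then show "g \<otimes> h \<in> C" using g h unfolding C_def by auto
  qed
  have a_C: "a \<in> C"
    using a_closed subgroup.m_closed[OF subgroup_N] subgroup.m_inv_closed[OF subgroup_N]
      generate.incl[of a "{a}" G] unfolding C_def by auto
  have b_C: "b \<in> C"
  proof -
    have "inv b \<otimes> a \<otimes> inv (inv b) \<in> N" using conj_inv_b b_closed by simp
    then have "\<forall>n\<in>N. inv b \<otimes> n \<otimes> inv (inv b) \<in> N"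
      using conjugate_generate_closed[OF a_closed inv_closed[OF b_closed]] by blast
    moreover have "\<forall>n\<in>N. b \<otimes> n \<otimes> inv b \<in> N"
      using conjugate_generate_closed[OF a_closed b_closed conj_b] by blast
    ultimately show ?thesis using b_closed unfolding C_def by simp
  qed
  have "E \<subseteq> C" using generate_subgroup_incl[OF _ subgroup_C] a_C b_C by simp
  then have "g \<in> C" using assms(1) by blast
  then show ?thesis using assms(2) unfolding C_def by blast
qed

lemma normal_N: "N \<lhd> K"
proof (rule group.normal_invI[OF group_K])
  show "subgroup N K" by (rule subgroup_incl[OF subgroup_N subgroup_E N_subset_E])
  fix x h assume "x \<in> carrier K" "h \<in> N"
  then show "x \<otimes>\<^bsub>K\<^esub> h \<otimes>\<^bsub>K\<^esub> inv\<^bsub>K\<^esub> x \<in> N"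
    using E_normalizes_N m_inv_consistent[OF subgroup_E] by simp
qed

lemma cyclic_N: "is_cyclic_group (K\<lparr>carrier := N\<rparr>)"
proof -
  have "group (G\<lparr>carrier := N\<rparr>)" by (rule subgroup_imp_group[OF subgroup_N])
  moreover have "generate (G\<lparr>carrier := N\<rparr>) {a} = N"
    using generate_consistent[OF _ subgroup_N] generate.incl[of a "{a}" G] by simp
  moreover have "a \<in> N" by (rule generate.incl) simp
  ultimately show ?thesis unfolding is_cyclic_group_def by auto
qed

text \<open>Every coset of \<open>N\<close> in \<open>K\<close> lies in the subgroup of \<open>K/N\<close> generated by the coset of \<open>b\<close>:
  the generators \<open>a, b\<close> of \<open>K\<close> map to the trivial coset and to \<open>N b\<close>.\<close>
lemma coset_in_generate_coset_b:
  assumes "x \<in> E" shows "N #>\<^bsub>K\<^esub> x \<in> generate (K Mod N) {N #>\<^bsub>K\<^esub> b}"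
proof -
  interpret NK: normal N K by (rule normal_N)
  let ?c = "N #>\<^bsub>K\<^esub> b"
  have a_N: "a \<in> N" and b_E: "b \<in> E" by (auto intro: generate.incl)
  have inv_N: "inv a \<in> N" using a_N subgroup.m_inv_closed[OF subgroup_N] by blast
  have trivial: "N #>\<^bsub>K\<^esub> y = N" if "y \<in> N" for y
    using NK.coset_join2[of y] that N_subset_E NK.subgroup_axioms by auto
  have N_gen: "N \<in> generate (K Mod N) {?c}"
    using generate.one[of "K Mod N" "{?c}"] by simp
  have c_carrier: "?c \<in> carrier (K Mod N)" using b_E by (auto simp: carrier_FactGroup)
  show ?thesis
    using assms
  proof (induction rule: generate.induct)
    case one
    show ?case using trivial[OF subgroup.one_closed[OF subgroup_N]] N_gen by simp
  next
    case (incl h)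
    then show ?case using trivial[OF a_N] N_gen generate.incl[of ?c "{?c}"] by auto
  next
    case (inv h)
    have "N #>\<^bsub>K\<^esub> inv b = inv\<^bsub>K Mod N\<^esub> ?c"
      using NK.inv_FactGroup[OF c_carrier] NK.rcos_inv[of b] b_E m_inv_consistent[OF subgroup_E b_E] by simp
    then show ?case using inv trivial[OF inv_N] N_gen generate.inv[of ?c "{?c}"] by auto
  next
    case (eng h1 h2)
    have "h1 \<in> E" "h2 \<in> E" using eng.hyps generate_incl[of "{a, b}"] a_closed b_closed by auto
    then have "N #>\<^bsub>K\<^esub> (h1 \<otimes> h2) = (N #>\<^bsub>K\<^esub> h1) \<otimes>\<^bsub>K Mod N\<^esub> (N #>\<^bsub>K\<^esub> h2)"
      using NK.rcos_sum[of h1 h2] by simp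
    then show ?case using eng.IH generate.eng by metis
  qed
qed

lemma cyclic_quotient: "is_cyclic_group (K Mod N)"
proof -
  interpret NK: normal N K by (rule normal_N)
  interpret Q: group "K Mod N" by (rule NK.factorgroup_is_group)
  have "b \<in> E" by (rule generate.incl) simp
  then have c_carrier: "N #>\<^bsub>K\<^esub> b \<in> carrier (K Mod N)" by (auto simp: carrier_FactGroup)
  then have "carrier (K Mod N) = generate (K Mod N) {N #>\<^bsub>K\<^esub> b}"
    using coset_in_generate_coset_b Q.generate_incl[of "{N #>\<^bsub>K\<^esub> b}"] by (auto simp: carrier_FactGroup)
  then show ?thesis unfolding is_cyclic_group_def using Q.is_group c_carrier by blast
qed

theorem metacyclic_K: "metacyclic K"
  unfolding metacyclic_def using group_K normal_N cyclic_N cyclic_quotient by blast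

end

subsection \<open>Transpositions\<close>

definition moved :: "('a \<Rightarrow> 'a) \<Rightarrow> 'a set" where
  "moved p = {x. p x \<noteq> x}"

lemma moved_transpose: "a \<noteq> b \<Longrightarrow> moved (Transposition.transpose a b) = {a, b}"
  by (auto simp: moved_def transpose_def)

lemma transpose_eq_iff_moved_eq:
  assumes "a \<noteq> b" "c \<noteq> d"
  shows "Transposition.transpose a b = Transposition.transpose c d \<longleftrightarrow> {a, b} = {c, d}"
  using assms moved_transpose by (metis doubleton_eq_iff transpose_commute)

lemma moved_square_of_order3:
  assumes "z \<circ> z \<circ> z = id" shows "moved (z \<circ> z) = moved z"
  using assms unfolding moved_def by (auto simp: fun_eq_iff) (metis comp_apply)+

lemma overlapping_transpositions_normal_form:
  assumes "a \<noteq> b" "c \<noteq> d" "Transposition.transpose a b \<noteq> Transposition.transpose c d"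
    and "{a, b} \<inter> {c, d} \<noteq> {}"
  obtains p q r where "p \<noteq> q" "p \<noteq> r" "q \<noteq> r"
    "Transposition.transpose a b = Transposition.transpose p q"
    "Transposition.transpose c d = Transposition.transpose p r" "{a, b} \<union> {c, d} = {p, q, r}"
proof -
  consider "a = c" | "a = d" | "b = c" | "b = d" using assms(4) by auto
  then show thesis
  proof cases
    case 1
    then show thesis using that[of a b d] assms(1-3) by auto
  next
    case 2
    then have "b \<noteq> c" using assms(3) by (auto simp: transpose_commute)
    then show thesis using that[of a b c] 2 assms(1,2) by (auto simp: transpose_commute)
  next
    case 3
    then have "a \<noteq> d" using assms(3) by (auto simp: transpose_commute)
    then show thesis using that[of b a d] 3 assms(1,2) by (auto simp: transpose_commute)
  next
    case 4
    then have "a \<noteq> c" using assms(3) by (auto simp: transpose_commute)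
    then show thesis using that[of b a c] 4 assms(1,2) by (auto simp: transpose_commute)
  qed
qed

lemma commutator_of_involutions:
  assumes "s \<circ> s = id" "t \<circ> t = id" "s \<circ> t = n \<circ> (t \<circ> s)"
  shows "n = s \<circ> t \<circ> s \<circ> t"
proof -
  have "(t \<circ> s) \<circ> (s \<circ> t) = t \<circ> (s \<circ> s) \<circ> t" by (simp add: comp_assoc)
  then have "(t \<circ> s) \<circ> (s \<circ> t) = id" using assms(1,2) by simp
  then have "n = n \<circ> (t \<circ> s) \<circ> (s \<circ> t)" by (simp add: comp_assoc)
  also have "\<dots> = s \<circ> t \<circ> s \<circ> t" using assms(3) by (simp add: comp_assoc)
  finally show ?thesis .
qed

lemma commutator_of_overlapping_transpositions:
  assumes "a \<noteq> b" "a \<noteq> c" "b \<noteq> c"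
  defines "z \<equiv> Transposition.transpose a b \<circ> Transposition.transpose a c
               \<circ> Transposition.transpose a b \<circ> Transposition.transpose a c"
  shows "z \<noteq> id" "z \<circ> z \<circ> z = id" "moved z = {a, b, c}"
proof -
  have z: "z = (\<lambda>x. if x = a then b else if x = b then c else if x = c then a else x)"
    unfolding z_def using assms by (intro ext) (simp add: transpose_def)
  have "z a \<noteq> id a" using assms(1) by (simp add: z)
  then show "z \<noteq> id" by metis
  show "z \<circ> z \<circ> z = id" using assms(1-3) by (intro ext) (simp add: z)
  show "moved z = {a, b, c}" using assms(1-3) by (auto simp: z moved_def)
qed

lemma commuting_involutions_product:
  assumes "s \<circ> s = id" "t \<circ> t = id" "s \<circ> t = t \<circ> s" "s \<noteq> t"
  shows "s \<circ> t \<noteq> id" "(s \<circ> t) \<circ> (s \<circ> t) = id"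
proof -
  show "s \<circ> t \<noteq> id"
  proof
    assume "s \<circ> t = id"
    then have "s \<circ> (s \<circ> t) = s" by simp
    then show False using assms(1,4) by (simp add: comp_assoc[symmetric])
  qed
  have "(s \<circ> t) \<circ> (s \<circ> t) = s \<circ> (t \<circ> s) \<circ> t" by (simp add: comp_assoc)
  also have "\<dots> = s \<circ> (s \<circ> t) \<circ> t" by (simp only: assms(3)[symmetric])
  also have "\<dots> = (s \<circ> s) \<circ> (t \<circ> t)" by (simp add: comp_assoc)
  finally show "(s \<circ> t) \<circ> (s \<circ> t) = id" using assms(1,2) by simp
qed

lemma disjoint_transpositions_commute:
  assumes "{a, b} \<inter> {c, d} = {}"
  shows "Transposition.transpose a b \<circ> Transposition.transpose c d
       = Transposition.transpose c d \<circ> Transposition.transpose a b"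
  using assms by (intro ext) (auto simp: transpose_def)

lemma disjoint_transpositions_products:
  assumes "a \<noteq> b" "c \<noteq> d" "e \<noteq> f"
    and "{a, b} \<inter> {c, d} = {}" "{a, b} \<inter> {e, f} = {}" "{c, d} \<inter> {e, f} = {}"
  defines "s \<equiv> Transposition.transpose a b" and "t \<equiv> Transposition.transpose c d"
    and "u \<equiv> Transposition.transpose e f"
  shows "{s, t, s \<circ> t} \<inter> {s, u, s \<circ> u} \<inter> {t, u, t \<circ> u} = {}"
proof -
  have "s \<noteq> t" "s \<noteq> u" "s \<noteq> t \<circ> u" "s \<circ> t \<noteq> t \<circ> u" "s \<circ> u \<noteq> t \<circ> u"
    using assms(1-6) unfolding s_def t_def u_def by (auto simp: transpose_def dest!: fun_cong[where x = a])
  moreover have "t \<noteq> u" "t \<noteq> s \<circ> u" "s \<circ> t \<noteq> s \<circ> u"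
    using assms(1-6) unfolding s_def t_def u_def by (auto simp: transpose_def dest!: fun_cong[where x = c])
  moreover have "u \<noteq> s \<circ> t"
    using assms(1-6) unfolding s_def t_def u_def by (auto simp: transpose_def dest!: fun_cong[where x = e])
  ultimately show ?thesis by (simp add: Int_insert_left not_sym)
qed

subsection \<open>Families of 2-sets\<close>

lemma card_pairs_in_small_set:
  assumes "finite U" "card U \<le> 3" and "\<And>e. e \<in> F \<Longrightarrow> e \<subseteq> U \<and> card e = 2"
  shows "card F \<le> 3"
proof -
  have "F \<subseteq> {B. B \<subseteq> U \<and> card B = 2}" using assms(3) by blast
  then have "card F \<le> card U choose 2"
    using card_mono[OF _ \<open>F \<subseteq> _\<close>] n_subsets[OF assms(1), of 2] assms(1) by simp
  also have "\<dots> \<le> 3"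
  proof -
    have "card U \<in> {0, 1, 2, 3}" using assms(2) by auto
    then show ?thesis by (auto simp: choose_two)
  qed
  finally show ?thesis .
qed

text \<open>A family of 2-sets in which any two intersecting members span the same set and which
  contains no three pairwise disjoint members has at most four members. (If two members meet,
  their union \<open>U\<close> has three points; members meeting \<open>U\<close> lie inside \<open>U\<close>, and at most one
  member avoids \<open>U\<close>. Otherwise the members are pairwise disjoint, so there are at most two.)\<close>
lemma card_pair_family_le_4:
  assumes fin: "finite E" and pairs: "\<And>e. e \<in> E \<Longrightarrow> card e = 2"
    and adjacent: "\<And>e f g h. \<lbrakk>e \<in> E; f \<in> E; g \<in> E; h \<in> E; e \<noteq> f; e \<inter> f \<noteq> {}; g \<noteq> h; g \<inter> h \<noteq> {}\<rbrakk>
                     \<Longrightarrow> e \<union> f = g \<union> h"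
    and no_matching: "\<And>e f g. \<lbrakk>e \<in> E; f \<in> E; g \<in> E; e \<inter> f = {}; e \<inter> g = {}; f \<inter> g = {}\<rbrakk> \<Longrightarrow> False"
  shows "card E \<le> 4"
proof (cases "\<exists>e\<in>E. \<exists>f\<in>E. e \<noteq> f \<and> e \<inter> f \<noteq> {}")
  case True
  then obtain e f where ef: "e \<in> E" "f \<in> E" "e \<noteq> f" "e \<inter> f \<noteq> {}" by blast
  define U where "U = e \<union> f"
  have fin_ef: "finite e" "finite f" using pairs ef(1,2) by (metis card.infinite zero_neq_numeral)+
  have "card U + card (e \<inter> f) = 4" using card_Un_Int[OF fin_ef] pairs ef(1,2) U_def by simp
  moreover have "card (e \<inter> f) \<ge> 1" using ef(4) fin_ef by (simp add: Suc_leI card_gt_0_iff)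
  ultimately have card_U: "card U \<le> 3" by simp
  have fin_U: "finite U" using fin_ef U_def by simp
  define inside where "inside = {d \<in> E. d \<subseteq> U}"
  define outside where "outside = {d \<in> E. d \<inter> U = {}}"
  have meet: "d \<subseteq> U" if d: "d \<in> E" "g \<in> {e, f}" "d \<inter> g \<noteq> {}" for d g
  proof (cases "d = g")
    case True
    then show ?thesis using d(2) U_def by auto
  next
    case False
    have "g \<in> E" using d(2) ef(1,2) by auto
    then have "d \<union> g = e \<union> f" using adjacent[OF d(1) _ ef(1,2)] False d(3) ef(3,4) by blast
    then show ?thesis using U_def by auto
  qed
  have cover: "E \<subseteq> inside \<union> outside"
  proof
    fix d assume d: "d \<in> E"
    show "d \<in> inside \<union> outside"
    proof (cases "d \<inter> e = {} \<and> d \<inter> f = {}")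
      case True
      then have "d \<inter> U = {}" by (auto simp: U_def)
      then show ?thesis using d outside_def by blast
    next
      case False
      then have "d \<subseteq> U" using meet[OF d] by blast
      then show ?thesis using d inside_def by blast
    qed
  qed
  have card_inside: "card inside \<le> 3"
    by (rule card_pairs_in_small_set[OF fin_U card_U]) (simp add: inside_def pairs)
  have "a = b" if "a \<in> outside" "b \<in> outside" for a b
  proof (rule ccontr)
    assume "a \<noteq> b"
    have ab: "a \<in> E" "b \<in> E" "a \<inter> U = {}" "b \<inter> U = {}" using that outside_def by auto
    have "a \<noteq> {}" using pairs[OF ab(1)] by auto
    show False
    proof (cases "a \<inter> b = {}")
      case True
      then show False using no_matching[OF ef(1) ab(1,2)] ab(3,4) U_def by blast
    next
      case False
      then have "a \<union> b = U" using adjacent[OF ab(1,2) ef(1,2)] \<open>a \<noteq> b\<close> ef U_def by blast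
      then show False using ab(3) \<open>a \<noteq> {}\<close> by blast
    qed
  qed
  then have card_outside: "card outside \<le> 1" using fin outside_def by (simp add: card_le_Suc0_iff_eq)
  have "card E \<le> card (inside \<union> outside)" using cover fin inside_def outside_def by (intro card_mono) auto
  also have "\<dots> \<le> card inside + card outside" by (rule card_Un_le)
  finally show ?thesis using card_inside card_outside by simp
next
  case False
  show ?thesis
  proof (rule ccontr)
    assume "\<not> card E \<le> 4"
    then have "3 \<le> card E" by simp
    then obtain F where F: "F \<subseteq> E" "card F = 3" by (rule obtain_subset_with_card_n)
    then obtain e f g where "F = {e, f, g}" "e \<noteq> f" "f \<noteq> g" "e \<noteq> g"
      by (auto simp: card_3_iff)
    then have efg: "e \<in> E" "f \<in> E" "g \<in> E" "e \<noteq> f" "e \<noteq> g" "f \<noteq> g" using F(1) by auto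
    then have "e \<inter> f = {}" "e \<inter> g = {}" "f \<inter> g = {}" using False by blast+
    then show False using no_matching[OF efg(1-3)] by blast
  qed
qed

subsection \<open>Transpositions in metacyclic permutation groups\<close>

locale metacyclic_permutation_group =
  fixes m :: nat and H N :: "(nat \<Rightarrow> nat) set"
  assumes subgroup_H: "subgroup H (sym_group m)"
    and normal_N: "N \<lhd> (sym_group m)\<lparr>carrier := H\<rparr>"
    and cyclic_N: "is_cyclic_group ((sym_group m)\<lparr>carrier := H\<rparr>\<lparr>carrier := N\<rparr>)"
    and cyclic_quotient: "is_cyclic_group ((sym_group m)\<lparr>carrier := H\<rparr> Mod N)"
begin

abbreviation K where "K \<equiv> (sym_group m)\<lparr>carrier := H\<rparr>"

lemma K_simps [simp]: "carrier K = H" "monoid.mult K = (\<circ>)" "\<one>\<^bsub>K\<^esub> = id"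
  by (simp_all add: sym_group_def)

lemma finite_H: "finite H"
proof -
  have "H \<subseteq> {p. p permutes {1..m}}" using subgroup.subset[OF subgroup_H] by (auto simp: sym_group_carrier)
  then show ?thesis using finite_permutations[of "{1..m}"] finite_subset by blast
qed

lemma N_subset_H: "N \<subseteq> H"
  using normal_imp_subgroup[OF normal_N] subgroup.subset by fastforce

lemma N_involution_unique:
  assumes "x \<in> N" "x \<noteq> id" "x \<circ> x = id" "y \<in> N" "y \<noteq> id" "y \<circ> y = id"
  shows "x = y"
proof -
  let ?L = "K\<lparr>carrier := N\<rparr>"
  interpret L: group ?L using cyclic_N unfolding is_cyclic_group_def by blast
  have "finite (carrier ?L)" using finite_H N_subset_H finite_subset by simp
  then show ?thesis using L.cyclic_involution_unique[OF _ cyclic_N] assms by (simp add: sym_group_def)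
qed

lemma N_order3_elements:
  assumes "x \<in> N" "x \<noteq> id" "x \<circ> x \<circ> x = id" "y \<in> N" "y \<noteq> id" "y \<circ> y \<circ> y = id"
  shows "y = x \<or> y = x \<circ> x"
proof -
  let ?L = "K\<lparr>carrier := N\<rparr>"
  interpret L: group ?L using cyclic_N unfolding is_cyclic_group_def by blast
  have "finite (carrier ?L)" using finite_H N_subset_H finite_subset by simp
  then show ?thesis using L.cyclic_order3_elements[OF _ cyclic_N] assms by (simp add: sym_group_def)
qed

lemma commute_mod_N:
  assumes "x \<in> H" "y \<in> H" shows "\<exists>n\<in>N. x \<circ> y = n \<circ> (y \<circ> x)"
proof -
  interpret normal N K by (rule normal_N)
  show ?thesis using cyclic_quotient_commute_mod[OF cyclic_quotient] assms by simp
qed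

lemma involutions_mod_N:
  assumes "x \<in> H" "x \<circ> x = id" "y \<in> H" "y \<circ> y = id"
  shows "x \<in> N \<or> y \<in> N \<or> x \<circ> y \<in> N"
proof -
  interpret normal N K by (rule normal_N)
  show ?thesis using cyclic_quotient_involutions[OF _ cyclic_quotient] finite_H assms by simp
qed

lemma commuting_involutions_meet_N:
  assumes "x \<in> H" "y \<in> H" "x \<circ> x = id" "y \<circ> y = id" "x \<noteq> id" "y \<noteq> id"
    and "x \<circ> y = y \<circ> x" "x \<noteq> y"
  obtains n where "n \<in> N \<inter> {x, y, x \<circ> y}" "n \<noteq> id" "n \<circ> n = id"
proof -
  have "x \<circ> y \<noteq> id" "(x \<circ> y) \<circ> (x \<circ> y) = id"
    using commuting_involutions_product[OF assms(3,4,7,8)] by simp_all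
  then show thesis using that involutions_mod_N[OF assms(1,3,2,4)] assms(3-6) by blast
qed

lemma transposition_in_H:
  assumes "s \<in> transpositions_in H"
  obtains a b where "a \<noteq> b" "s = Transposition.transpose a b" "s \<in> H"
  using assms unfolding transpositions_in_def by blast

text \<open>The commutator of two distinct transpositions of \<open>H\<close> with a common point is a 3-cycle
  on the points they move, and it lies in \<open>N\<close> because \<open>H/N\<close> is abelian.\<close>
lemma overlapping_transpositions_commutator:
  assumes s: "s \<in> transpositions_in H" and t: "t \<in> transpositions_in H"
    and st: "s \<noteq> t" "moved s \<inter> moved t \<noteq> {}"
  obtains z where "z \<in> N" "z \<noteq> id" "z \<circ> z \<circ> z = id" "moved z = moved s \<union> moved t"
proof -
  obtain a b where ab: "a \<noteq> b" "s = Transposition.transpose a b" "s \<in> H"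
    using s by (rule transposition_in_H)
  obtain c d where cd: "c \<noteq> d" "t = Transposition.transpose c d" "t \<in> H"
    using t by (rule transposition_in_H)
  obtain p q r where pqr: "p \<noteq> q" "p \<noteq> r" "q \<noteq> r"
    "s = Transposition.transpose p q" "t = Transposition.transpose p r" "{a, b} \<union> {c, d} = {p, q, r}"
    using overlapping_transpositions_normal_form[of a b c d] ab cd st moved_transpose by metis
  obtain n where n: "n \<in> N" "s \<circ> t = n \<circ> (t \<circ> s)" using commute_mod_N[OF ab(3) cd(3)] by blast
  have "s \<circ> s = id" "t \<circ> t = id" using pqr(4,5) by simp_all
  then have "n = s \<circ> t \<circ> s \<circ> t" using commutator_of_involutions n(2) by blast
  moreover have "moved s \<union> moved t = {p, q, r}"
    using pqr(6) ab(2) cd(2) moved_transpose[OF ab(1)] moved_transpose[OF cd(1)] by simp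
  ultimately show thesis
    using that[of n] n(1) commutator_of_overlapping_transpositions[OF pqr(1-3)] pqr(4,5) by simp
qed

text \<open>All pairs of distinct overlapping transpositions of \<open>H\<close> move the same three points:
  their 3-cycles lie in the cyclic group \<open>N\<close>, so they are equal or mutually inverse.\<close>
lemma overlapping_pairs_same_union:
  assumes "s \<in> transpositions_in H" "t \<in> transpositions_in H" "s \<noteq> t" "moved s \<inter> moved t \<noteq> {}"
    and "u \<in> transpositions_in H" "v \<in> transpositions_in H" "u \<noteq> v" "moved u \<inter> moved v \<noteq> {}"
  shows "moved s \<union> moved t = moved u \<union> moved v"
proof -
  obtain y where y: "y \<in> N" "y \<noteq> id" "y \<circ> y \<circ> y = id" "moved y = moved s \<union> moved t"
    using overlapping_transpositions_commutator[OF assms(1-4)] by blast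
  obtain z where z: "z \<in> N" "z \<noteq> id" "z \<circ> z \<circ> z = id" "moved z = moved u \<union> moved v"
    using overlapping_transpositions_commutator[OF assms(5-8)] by blast
  have "z = y \<or> z = y \<circ> y" using N_order3_elements[OF y(1-3) z(1-3)] .
  then have "moved z = moved y" using moved_square_of_order3[OF y(3)] by auto
  then show ?thesis using y(4) z(4) by simp
qed

text \<open>\<open>H\<close> contains no three transpositions with pairwise disjoint supports:
  otherwise the cyclic group \<open>N\<close> would contain two distinct involutions.\<close>
lemma no_three_disjoint_transpositions:
  assumes "s \<in> transpositions_in H" "t \<in> transpositions_in H" "u \<in> transpositions_in H"
    and disjoint: "moved s \<inter> moved t = {}" "moved s \<inter> moved u = {}" "moved t \<inter> moved u = {}"
  shows False
proof -
  obtain a b where ab: "a \<noteq> b" "s = Transposition.transpose a b" "s \<in> H"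
    using assms(1) by (rule transposition_in_H)
  obtain c d where cd: "c \<noteq> d" "t = Transposition.transpose c d" "t \<in> H"
    using assms(2) by (rule transposition_in_H)
  obtain e f where ef: "e \<noteq> f" "u = Transposition.transpose e f" "u \<in> H"
    using assms(3) by (rule transposition_in_H)
  have moved: "moved s = {a, b}" "moved t = {c, d}" "moved u = {e, f}"
    using ab cd ef moved_transpose by simp_all
  then have dj: "{a, b} \<inter> {c, d} = {}" "{a, b} \<inter> {e, f} = {}" "{c, d} \<inter> {e, f} = {}"
    using disjoint by simp_all
  have inv: "s \<circ> s = id" "t \<circ> t = id" "u \<circ> u = id" "s \<noteq> id" "t \<noteq> id" "u \<noteq> id"
    using ab cd ef by (simp_all add: transpose_eq_id_iff)
  have distinct: "s \<noteq> t" "s \<noteq> u" "t \<noteq> u" using disjoint moved by auto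
  have commute: "s \<circ> t = t \<circ> s" "s \<circ> u = u \<circ> s" "t \<circ> u = u \<circ> t"
    unfolding ab(2) cd(2) ef(2) using dj by (simp_all add: disjoint_transpositions_commute)
  obtain n1 where n1: "n1 \<in> N \<inter> {s, t, s \<circ> t}" "n1 \<noteq> id" "n1 \<circ> n1 = id"
    by (rule commuting_involutions_meet_N[OF ab(3) cd(3) inv(1,2,4,5) commute(1) distinct(1)])
  obtain n2 where n2: "n2 \<in> N \<inter> {s, u, s \<circ> u}" "n2 \<noteq> id" "n2 \<circ> n2 = id"
    by (rule commuting_involutions_meet_N[OF ab(3) ef(3) inv(1,3,4,6) commute(2) distinct(2)])
  obtain n3 where n3: "n3 \<in> N \<inter> {t, u, t \<circ> u}" "n3 \<noteq> id" "n3 \<circ> n3 = id"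
    by (rule commuting_involutions_meet_N[OF cd(3) ef(3) inv(2,3,5,6) commute(3) distinct(3)])
  have "n2 = n1" "n3 = n1"
    using N_involution_unique[of n2 n1] N_involution_unique[of n3 n1] n1 n2 n3 by auto
  then have "n1 \<in> {s, t, s \<circ> t} \<inter> {s, u, s \<circ> u} \<inter> {t, u, t \<circ> u}" using n1 n2 n3 by auto
  moreover have "{s, t, s \<circ> t} \<inter> {s, u, s \<circ> u} \<inter> {t, u, t \<circ> u} = {}"
    unfolding ab(2) cd(2) ef(2) by (rule disjoint_transpositions_products[OF ab(1) cd(1) ef(1) dj])
  ultimately show False by blast
qed

lemma moved_inj_on_transpositions: "inj_on moved (transpositions_in H)"
proof (rule inj_onI)
  fix s t assume "s \<in> transpositions_in H" "t \<in> transpositions_in H" and eq: "moved s = moved t"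
  then obtain a b c d where "a \<noteq> b" "s = Transposition.transpose a b" "c \<noteq> d" "t = Transposition.transpose c d"
    by (meson transposition_in_H)
  then show "s = t" using eq by (simp add: moved_transpose transpose_eq_iff_moved_eq)
qed

text \<open>The supports of the transpositions of \<open>H\<close> form a family of 2-sets as in
  \<open>card_pair_family_le_4\<close>.\<close>
theorem card_transpositions_le_4: "finite (transpositions_in H) \<and> card (transpositions_in H) \<le> 4"
proof -
  let ?T = "transpositions_in H"
  have fin: "finite ?T" using finite_H finite_subset unfolding transpositions_in_def by fastforce
  have "card (moved ` ?T) \<le> 4"
  proof (rule card_pair_family_le_4)
    show "finite (moved ` ?T)" using fin by simp
  next
    fix e assume "e \<in> moved ` ?T"
    then obtain s where s: "s \<in> ?T" "e = moved s" by blast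
    obtain a b where "a \<noteq> b" "s = Transposition.transpose a b" "s \<in> H"
      using s(1) by (rule transposition_in_H)
    then show "card e = 2" using s(2) by (simp add: moved_transpose)
  next
    fix e f g h assume "e \<in> moved ` ?T" "f \<in> moved ` ?T" "g \<in> moved ` ?T" "h \<in> moved ` ?T"
      and meet: "e \<noteq> f" "e \<inter> f \<noteq> {}" "g \<noteq> h" "g \<inter> h \<noteq> {}"
    then obtain s t u v where "s \<in> ?T" "t \<in> ?T" "u \<in> ?T" "v \<in> ?T"
      and "e = moved s" "f = moved t" "g = moved u" "h = moved v" by blast
    then show "e \<union> f = g \<union> h" using overlapping_pairs_same_union[of s t u v] meet by blast
  next
    fix e f g assume "e \<in> moved ` ?T" "f \<in> moved ` ?T" "g \<in> moved ` ?T"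
      and disjoint: "e \<inter> f = {}" "e \<inter> g = {}" "f \<inter> g = {}"
    then obtain s t u where "s \<in> ?T" "t \<in> ?T" "u \<in> ?T"
      and "e = moved s" "f = moved t" "g = moved u" by blast
    then show False using no_three_disjoint_transpositions[of s t u] disjoint by blast
  qed
  then show ?thesis using fin card_image[OF moved_inj_on_transpositions] by simp
qed

end

subsection \<open>The extremal example\<close>

lemma generate_sym_group_comp:
  "x \<in> generate (sym_group n) A \<Longrightarrow> y \<in> generate (sym_group n) A \<Longrightarrow> x \<circ> y \<in> generate (sym_group n) A"
  by (metis generate.eng sym_group_mult)

lemma setwise_stabilizer_subgroup:
  "subgroup {p \<in> carrier (sym_group n). p ` A = A} (sym_group n)"
proof (rule group.subgroupI[OF sym_group_is_group])
  show "{p \<in> carrier (sym_group n). p ` A = A} \<subseteq> carrier (sym_group n)" by blast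
  have "id \<in> {p \<in> carrier (sym_group n). p ` A = A}" by (simp add: sym_group_carrier permutes_id)
  then show "{p \<in> carrier (sym_group n). p ` A = A} \<noteq> {}" by blast
next
  fix p assume p: "p \<in> {p \<in> carrier (sym_group n). p ` A = A}"
  then have "inv' p ` A = inv' p ` (p ` A)" by simp
  also have "\<dots> = A" using p permutes_inj by (intro image_inv_f_f) (auto simp: sym_group_carrier)
  finally show "inv\<^bsub>sym_group n\<^esub> p \<in> {p \<in> carrier (sym_group n). p ` A = A}"
    using p sym_group_inv_closed by auto
next
  fix p q assume p: "p \<in> {p \<in> carrier (sym_group n). p ` A = A}" and q: "q \<in> {p \<in> carrier (sym_group n). p ` A = A}"
  then have "(p \<circ> q) ` A = A" by (metis (mono_tags, lifting) image_comp mem_Collect_eq)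
  then show "p \<otimes>\<^bsub>sym_group n\<^esub> q \<in> {p \<in> carrier (sym_group n). p ` A = A}"
    using p q by (simp add: sym_group_mult sym_group_carrier permutes_compose)
qed

lemma permutes_5_eqI:
  assumes "p permutes {1..5}" "q permutes {1..5}"
    and "p 1 = q 1" "p 2 = q 2" "p 3 = q 3" "p 4 = q 4" "p (5::nat) = q 5"
  shows "p = q"
proof
  fix x show "p x = q x"
  proof (cases "x \<in> {1..5}")
    case True
    then have "x = 1 \<or> x = 2 \<or> x = 3 \<or> x = 4 \<or> x = 5" by auto
    then show ?thesis using assms(3-7) by auto
  next
    case False
    then show ?thesis using assms(1,2) by (simp add: permutes_not_in)
  qed
qed

definition sigma :: "nat \<Rightarrow> nat" where "sigma = cycle_of_list [1, 2, 3] \<circ> cycle_of_list [4, 5]"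
definition tau :: "nat \<Rightarrow> nat" where "tau = cycle_of_list [1, 2]"

abbreviation example_group :: "(nat \<Rightarrow> nat) set" where "example_group \<equiv> generate (sym_group 5) {sigma, tau}"

lemma sigma_permutes: "sigma permutes {1..5}"
  unfolding sigma_def by (intro permutes_compose permutes_subset[OF cycle_permutes]) auto

lemma tau_permutes: "tau permutes {1..5}"
  unfolding tau_def by (intro permutes_subset[OF cycle_permutes]) auto

lemma tau_transposition: "tau = Transposition.transpose 1 2"
  by (simp add: tau_def)

lemmas permutation_words_eqI =
  permutes_5_eqI permutes_compose sigma_permutes tau_permutes permutes_swap_id

lemma tau_involution: "tau \<circ> tau = id"
  by (simp add: tau_transposition)

text \<open>\<open>\<tau> \<sigma> \<tau> = \<sigma>\<^sup>-\<^sup>1\<close>, so \<open>\<tau>\<close> normalises \<open>\<langle>\<sigma>\<rangle>\<close>.\<close>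
lemma tau_conjugates_sigma: "tau \<circ> sigma \<circ> tau = sigma \<circ> sigma \<circ> sigma \<circ> sigma \<circ> sigma"
  by (intro permutation_words_eqI) (simp_all add: sigma_def tau_def transpose_def)

lemma sigma_cubed: "sigma \<circ> sigma \<circ> sigma = Transposition.transpose 4 5"
  by (intro permutation_words_eqI) (simp_all add: sigma_def transpose_def)

lemma transpose_2_3_word:
  "sigma \<circ> tau \<circ> (sigma \<circ> sigma \<circ> sigma \<circ> sigma \<circ> sigma) = Transposition.transpose 2 3"
  by (intro permutation_words_eqI) (simp_all add: sigma_def tau_def transpose_def)

lemma transpose_1_3_word:
  "sigma \<circ> sigma \<circ> tau \<circ> (sigma \<circ> sigma \<circ> sigma \<circ> sigma) = Transposition.transpose 1 3"
  by (intro permutation_words_eqI) (simp_all add: sigma_def tau_def transpose_def)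

lemma example_normalizing_pair: "normalizing_pair (sym_group 5) sigma tau"
proof -
  interpret S: group "sym_group 5" by (rule sym_group_is_group)
  have carrier: "sigma \<in> carrier (sym_group 5)" "tau \<in> carrier (sym_group 5)"
    using sigma_permutes tau_permutes by (simp_all add: sym_group_carrier)
  have inv_tau: "inv\<^bsub>sym_group 5\<^esub> tau = tau"
    using S.inv_equality[OF _ carrier(2) carrier(2)] tau_involution by (simp add: sym_group_mult sym_group_one)
  have "sigma \<in> generate (sym_group 5) {sigma}" by (rule generate.incl) simp
  then have "sigma \<circ> sigma \<circ> sigma \<circ> sigma \<circ> sigma \<in> generate (sym_group 5) {sigma}"
    by (intro generate_sym_group_comp)
  then have "tau \<circ> sigma \<circ> tau \<in> generate (sym_group 5) {sigma}" by (simp only: tau_conjugates_sigma)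
  then show ?thesis
    using carrier inv_tau by unfold_locales (simp_all add: sym_group_mult)
qed

lemma example_group_stabilizes: "p \<in> example_group \<Longrightarrow> p ` {1, 2, 3} = {1, 2, 3}"
proof -
  have "sigma ` {1, 2, 3} = {1, 2, 3}" "tau ` {1, 2, 3} = {1, 2, 3}"
    by (auto simp: sigma_def tau_def transpose_def)
  then have "{sigma, tau} \<subseteq> {p \<in> carrier (sym_group 5). p ` {1, 2, 3} = {1, 2, 3}}"
    using sigma_permutes tau_permutes by (simp add: sym_group_carrier)
  then have "example_group \<subseteq> {p \<in> carrier (sym_group 5). p ` {1, 2, 3} = {1, 2, 3}}"
    by (rule group.generate_subgroup_incl[OF sym_group_is_group _ setwise_stabilizer_subgroup])
  then show "p \<in> example_group \<Longrightarrow> p ` {1, 2, 3} = {1, 2, 3}" by blast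
qed

lemma transposition_stabilizing_123:
  assumes "a \<noteq> b" "Transposition.transpose a b permutes {1..5}"
    and "Transposition.transpose a b ` {1, 2, 3} = {1, 2, 3}"
  shows "Transposition.transpose a (b::nat) \<in> {Transposition.transpose 1 2, Transposition.transpose 2 3,
                Transposition.transpose 1 3, Transposition.transpose 4 5}"
proof -
  have "a \<in> {1..5}" "b \<in> {1..5}" using assms(1,2) permutes_not_in by fastforce+
  then have a: "a = 1 \<or> a = 2 \<or> a = 3 \<or> a = 4 \<or> a = 5" and b: "b = 1 \<or> b = 2 \<or> b = 3 \<or> b = 4 \<or> b = 5"
    by auto
  have "a \<in> {1, 2, 3} \<longleftrightarrow> b \<in> {1, 2, 3}"
    using assms(3) by (metis image_eqI transpose_apply_first transpose_apply_second)
  then show ?thesis using a b assms(1) by (elim disjE) (simp_all add: transpose_commute)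
qed

lemma example_group_transpositions:
  "transpositions_in example_group = {Transposition.transpose 1 2, Transposition.transpose 2 3,
                           Transposition.transpose 1 3, Transposition.transpose 4 5}"
proof
  show "transpositions_in example_group \<subseteq> {Transposition.transpose 1 2, Transposition.transpose 2 3,
                           Transposition.transpose 1 3, Transposition.transpose 4 5}"
  proof
    fix p assume "p \<in> transpositions_in example_group"
    then obtain a b where p: "p \<in> example_group" "a \<noteq> b" "p = Transposition.transpose a b"
      unfolding transpositions_in_def by blast
    have "example_group \<subseteq> carrier (sym_group 5)"
      using sigma_permutes tau_permutes
      by (intro group.generate_incl[OF sym_group_is_group]) (simp add: sym_group_carrier)
    then have "p permutes {1..5}" using p(1) by (auto simp: sym_group_carrier)
    then show "p \<in> {Transposition.transpose 1 2, Transposition.transpose 2 3,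
                           Transposition.transpose 1 3, Transposition.transpose 4 5}"
      using transposition_stabilizing_123 example_group_stabilizes[OF p(1)] p(2,3) by blast
  qed
next
  have gens: "sigma \<in> example_group" "tau \<in> example_group" by (auto intro: generate.incl)
  have "Transposition.transpose 1 2 \<in> example_group" using gens(2) by (simp only: tau_transposition)
  moreover have "Transposition.transpose 2 3 \<in> example_group"
    unfolding transpose_2_3_word[symmetric] by (intro generate_sym_group_comp gens)+
  moreover have "Transposition.transpose 1 3 \<in> example_group"
    unfolding transpose_1_3_word[symmetric] by (intro generate_sym_group_comp gens)+
  moreover have "Transposition.transpose 4 5 \<in> example_group"
    unfolding sigma_cubed[symmetric] by (intro generate_sym_group_comp gens)+
  moreover have "Transposition.transpose a b \<in> transpositions_in example_group"
    if "a \<noteq> b" "Transposition.transpose a b \<in> example_group" for a b :: nat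
    using that unfolding transpositions_in_def by blast
  ultimately show "{Transposition.transpose 1 2, Transposition.transpose 2 3,
              Transposition.transpose 1 3, Transposition.transpose 4 5} \<subseteq> transpositions_in example_group"
    by simp
qed

theorem mainTheorem12:
  shows "(\<forall>(m::nat) H. subgroup H (sym_group m) \<and> metacyclic ((sym_group m)\<lparr>carrier := H\<rparr>)
            \<longrightarrow> finite (transpositions_in H) \<and> card (transpositions_in H) \<le> 4)
     \<and> (let H0 = generate (sym_group 5)
                   {cycle_of_list [1, 2, 3] \<circ> cycle_of_list [4, 5], cycle_of_list [1, 2]}
        in subgroup H0 (sym_group 5) \<and> metacyclic ((sym_group 5)\<lparr>carrier := H0\<rparr>)
           \<and> transpositions_in H0 =
               {Transposition.transpose 1 2, Transposition.transpose 2 3,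
                Transposition.transpose 1 3, Transposition.transpose 4 5})"
proof
  show "\<forall>(m::nat) H. subgroup H (sym_group m) \<and> metacyclic ((sym_group m)\<lparr>carrier := H\<rparr>)
            \<longrightarrow> finite (transpositions_in H) \<and> card (transpositions_in H) \<le> 4"
  proof (intro allI impI, elim conjE)
    fix m H assume H: "subgroup H (sym_group m)" and "metacyclic ((sym_group m)\<lparr>carrier := H\<rparr>)"
    then obtain N where N: "N \<lhd> (sym_group m)\<lparr>carrier := H\<rparr>"
      "is_cyclic_group ((sym_group m)\<lparr>carrier := H\<rparr>\<lparr>carrier := N\<rparr>)"
      "is_cyclic_group ((sym_group m)\<lparr>carrier := H\<rparr> Mod N)"
      unfolding metacyclic_def by blast
    interpret metacyclic_permutation_group m H N
      by (rule metacyclic_permutation_group.intro[OF H N])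
    show "finite (transpositions_in H) \<and> card (transpositions_in H) \<le> 4"
      by (rule card_transpositions_le_4)
  qed
  have "subgroup example_group (sym_group 5)"
    using sigma_permutes tau_permutes
    by (intro group.generate_is_subgroup[OF sym_group_is_group]) (simp add: sym_group_carrier)
  moreover have "metacyclic ((sym_group 5)\<lparr>carrier := example_group\<rparr>)"
    by (rule normalizing_pair.metacyclic_K[OF example_normalizing_pair])
  ultimately show "let H0 = generate (sym_group 5)
                   {cycle_of_list [1, 2, 3] \<circ> cycle_of_list [4, 5], cycle_of_list [1, 2]}
        in subgroup H0 (sym_group 5) \<and> metacyclic ((sym_group 5)\<lparr>carrier := H0\<rparr>)
           \<and> transpositions_in H0 =
               {Transposition.transpose 1 2, Transposition.transpose 2 3,
                Transposition.transpose 1 3, Transposition.transpose 4 5}"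
    unfolding Let_def sigma_def[symmetric] tau_def[symmetric] using example_group_transpositions by simp
qed

end
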